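(* Let $\langle \underline{S}, \mathcal{G}, l, u\rangle$ be a granular operator space (as defined in the context). Define the relation $\approx$ on $\wp(\underline{S})$ by $A \approx B$ if and only if $A^l = B^l$ and $A^u = B^u$, and on the quotient $\wp(\underline{S})|\approx$ define $\alpha \Subset \beta$ if and only if $\alpha^l \subseteq \beta^l$ and $\alpha^u \subseteq \beta^u$, where for an equivalence class $\alpha$, $\alpha^l$ and $\alpha^u$ denote the (common) lower and upper approximations of its members. Then $\Subset$ is a bounded partial order on $\wp(\underline{S})|\approx$, with least element the class of $\emptyset$ (whose approximations are $(\emptyset,\emptyset)$) and greatest element the class of $\underline{S}$ (whose approximations are $(\underline{S}^l, \underline{S}^u)$).
   Context: A granular operator space is a structure $\langle \underline{S}, \mathcal{G}, l, u\rangle$ where $\underline{S}$ is a set, $l, u : \wp(\underline{S}) \to \wp(\underline{S})$ are maps (written $a \mapsto a^l$, $a \mapsto a^u$), and $\mathcal{G} \subseteq \wp(\underline{S})$, such that for all $a, b \subseteq \underline{S}$: $a^l \subseteq a$, $a^{ll} = a^l$, $a^u \subseteq a^{uu}$; if $a \subseteq b$ then $a^l \subseteq b^l$ and $a^u \subseteq b^u$; $\emptyset^l = \emptyset$, $\emptyset^u = \emptyset$, $\underline{S}^l \subseteq \underline{S}$, $\underline{S}^u \subseteq \underline{S}$. Moreover $\mathcal{G}$ is an admissible granulation, i.e. (WRA) for every $a \subseteq \underline{S}$ there exist $b_1,\dots,b_r \in \mathcal{G}$ and a term $t$ built from $\cup, \cap$, complementation, $\underline{S}$ and $\emptyset$ with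 $t(b_1,\dots,b_r) = a^l$, and likewise there exist $b'_1,\dots,b'_s\in\mathcal{G}$ and such a term $t'$ with $t'(b'_1,\dots,b'_s) = a^u$; (LS) for every $b \in \mathcal{G}$ and every $a \subseteq \underline{S}$, if $b \subseteq a$ then $b \subseteq a^l$; (FU) for all $a, b \in \mathcal{G}$ there exists $z \subseteq \underline{S}$ with $a \subset z$, $b \subset z$ and $z^l = z^u = z$. *)

theory Defs
  imports Main
begin

datatype bterm = BVar nat | BUn bterm bterm | BInt bterm bterm | BCompl bterm
  | BTop | BBot

fun bvars :: "bterm \<Rightarrow> nat set" where
  "bvars (BVar i) = {i}"
| "bvars (BUn s t) = bvars s \<union> bvars t"
| "bvars (BInt s t) = bvars s \<union> bvars t"
| "bvars (BCompl s) = bvars s"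
| "bvars BTop = {}"
| "bvars BBot = {}"

fun beval :: "'a set \<Rightarrow> (nat \<Rightarrow> 'a set) \<Rightarrow> bterm \<Rightarrow> 'a set" where
  "beval S b (BVar i) = b i"
| "beval S b (BUn s t) = beval S b s \<union> beval S b t"
| "beval S b (BInt s t) = beval S b s \<inter> beval S b t"
| "beval S b (BCompl s) = S - beval S b s"
| "beval S b BTop = S"
| "beval S b BBot = {}"

definition term_repr :: "'a set \<Rightarrow> 'a set set \<Rightarrow> 'a set \<Rightarrow> bool" where
  "term_repr S G x \<longleftrightarrow> (\<exists>t b. (\<forall>i\<in>bvars t. b i \<in> G) \<and> beval S b t = x)"

definition granular_operator_space ::
  "'a set \<Rightarrow> 'a set set \<Rightarrow> ('a set \<Rightarrow> 'a set) \<Rightarrow> ('a set \<Rightarrow> 'a set) \<Rightarrow> bool" where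
  "granular_operator_space S G l u \<longleftrightarrow>
     G \<subseteq> Pow S \<and>
     (\<forall>a. a \<subseteq> S \<longrightarrow> l a \<subseteq> a \<and> l (l a) = l a \<and> u a \<subseteq> u (u a)) \<and>
     (\<forall>a b. a \<subseteq> S \<longrightarrow> b \<subseteq> S \<longrightarrow> a \<subseteq> b \<longrightarrow> l a \<subseteq> l b \<and> u a \<subseteq> u b) \<and>
     l {} = {} \<and> u {} = {} \<and> l S \<subseteq> S \<and> u S \<subseteq> S \<and>
     \<comment> \<open>(WRA)\<close>
     (\<forall>a. a \<subseteq> S \<longrightarrow> term_repr S G (l a) \<and> term_repr S G (u a)) \<and>
     \<comment> \<open>(LS)\<close>
     (\<forall>b\<in>G. \<forall>a. a \<subseteq> S \<longrightarrow> b \<subseteq> a \<longrightarrow> b \<subseteq> l a) \<and>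
     \<comment> \<open>(FU)\<close>
     (\<forall>a\<in>G. \<forall>b\<in>G. \<exists>z. z \<subseteq> S \<and> a \<subset> z \<and> b \<subset> z \<and> l z = z \<and> u z = z)"

definition rough_eq :: "'a set \<Rightarrow> ('a set \<Rightarrow> 'a set) \<Rightarrow> ('a set \<Rightarrow> 'a set) \<Rightarrow> 'a set rel" where
  "rough_eq S l u = {(A, B). A \<subseteq> S \<and> B \<subseteq> S \<and> l A = l B \<and> u A = u B}"

definition cls_l :: "('a set \<Rightarrow> 'a set) \<Rightarrow> 'a set set \<Rightarrow> 'a set" where
  "cls_l l \<alpha> = (THE X. \<forall>A\<in>\<alpha>. l A = X)"

definition cls_u :: "('a set \<Rightarrow> 'a set) \<Rightarrow> 'a set set \<Rightarrow> 'a set" where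
  "cls_u u \<alpha> = (THE X. \<forall>A\<in>\<alpha>. u A = X)"

definition cls_le :: "('a set \<Rightarrow> 'a set) \<Rightarrow> ('a set \<Rightarrow> 'a set) \<Rightarrow> 'a set set \<Rightarrow> 'a set set \<Rightarrow> bool" where
  "cls_le l u \<alpha> \<beta> \<longleftrightarrow> cls_l l \<alpha> \<subseteq> cls_l l \<beta> \<and> cls_u u \<alpha> \<subseteq> cls_u u \<beta>"

end

theory Submission
  imports Defs
begin

text \<open>A class is determined by the pair of approximations its members share, so the order on
  the quotient is componentwise inclusion of these pairs, pulled back along an injective map;
  being a partial order thus needs nothing of \<open>l\<close> and \<open>u\<close>. The bounds come from
  \<open>l {} = u {} = {}\<close> and monotonicity of both operators.\<close>

lemma self_in_rough_eq_Image: "A \<subseteq> S \<Longrightarrow> A \<in> rough_eq S l u `` {A}"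
  by (simp add: rough_eq_def)

lemma cls_l_rough_eq_Image:
  assumes "A \<subseteq> S"
  shows "cls_l l (rough_eq S l u `` {A}) = l A"
  unfolding cls_l_def
proof (rule the_equality)
  fix X assume "\<forall>B\<in>rough_eq S l u `` {A}. l B = X"
  then show "X = l A" using self_in_rough_eq_Image[OF assms] by simp
qed (simp add: rough_eq_def)

lemma cls_u_rough_eq_Image:
  assumes "A \<subseteq> S"
  shows "cls_u u (rough_eq S l u `` {A}) = u A"
  unfolding cls_u_def
proof (rule the_equality)
  fix X assume "\<forall>B\<in>rough_eq S l u `` {A}. u B = X"
  then show "X = u A" using self_in_rough_eq_Image[OF assms] by simp
qed (simp add: rough_eq_def)

lemma cls_le_rough_eq_Image_iff:
  assumes "A \<subseteq> S" "B \<subseteq> S"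
  shows "cls_le l u (rough_eq S l u `` {A}) (rough_eq S l u `` {B})
    \<longleftrightarrow> l A \<subseteq> l B \<and> u A \<subseteq> u B"
  using assms by (simp add: cls_le_def cls_l_rough_eq_Image cls_u_rough_eq_Image)

lemma rough_eq_quotientE:
  assumes "\<alpha> \<in> Pow S // rough_eq S l u"
  obtains A where "A \<subseteq> S" "\<alpha> = rough_eq S l u `` {A}"
  using assms by (rule quotientE) (simp add: that)

lemma rough_eq_Image_in_quotient: "A \<subseteq> S \<Longrightarrow> rough_eq S l u `` {A} \<in> Pow S // rough_eq S l u"
  by (rule quotientI) simp

lemma inj_on_cls_approx:
  "inj_on (\<lambda>\<alpha>. (cls_l l \<alpha>, cls_u u \<alpha>)) (Pow S // rough_eq S l u)"
proof (rule inj_onI)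
  fix \<alpha> \<beta>
  assume "\<alpha> \<in> Pow S // rough_eq S l u" "\<beta> \<in> Pow S // rough_eq S l u"
    and approx_eq: "(cls_l l \<alpha>, cls_u u \<alpha>) = (cls_l l \<beta>, cls_u u \<beta>)"
  then obtain A B where A: "A \<subseteq> S" "\<alpha> = rough_eq S l u `` {A}"
    and B: "B \<subseteq> S" "\<beta> = rough_eq S l u `` {B}"
    by (meson rough_eq_quotientE)
  have "l A = l B" "u A = u B"
    using approx_eq A B by (simp_all add: cls_l_rough_eq_Image cls_u_rough_eq_Image)
  with A B show "\<alpha> = \<beta>"
    by (auto simp: rough_eq_def)
qed

lemma partial_order_on_cls_le:
  fixes S :: "'a set" and l u :: "'a set \<Rightarrow> 'a set"
  defines "Q \<equiv> Pow S // rough_eq S l u"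
  shows "partial_order_on Q {(\<alpha>, \<beta>). \<alpha> \<in> Q \<and> \<beta> \<in> Q \<and> cls_le l u \<alpha> \<beta>}"
    (is "partial_order_on Q ?le")
proof -
  have "?le \<subseteq> Q \<times> Q"
    by blast
  moreover have "refl_on Q ?le"
    by (rule refl_onI) (auto simp: cls_le_def)
  moreover have "trans ?le"
    by (rule transI) (auto simp: cls_le_def)
  moreover have "antisym ?le"
  proof (rule antisymI)
    fix \<alpha> \<beta> assume "(\<alpha>, \<beta>) \<in> ?le" "(\<beta>, \<alpha>) \<in> ?le"
    then show "\<alpha> = \<beta>"
      using inj_on_cls_approx[of l u S, folded Q_def] by (auto simp: cls_le_def inj_on_def)
  qed
  ultimately show ?thesis
    by (simp add: partial_order_on_def preorder_on_def)
qed

lemma granular_operator_space_mono: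
  assumes "granular_operator_space S G l u" "A \<subseteq> S" "B \<subseteq> S" "A \<subseteq> B"
  shows "l A \<subseteq> l B" "u A \<subseteq> u B"
proof -
  have "\<forall>a b. a \<subseteq> S \<longrightarrow> b \<subseteq> S \<longrightarrow> a \<subseteq> b \<longrightarrow> l a \<subseteq> l b \<and> u a \<subseteq> u b"
    using assms(1) unfolding granular_operator_space_def by (elim conjE)
  then show "l A \<subseteq> l B" "u A \<subseteq> u B" using assms(2-4) by blast+
qed

lemma granular_operator_space_empty:
  assumes "granular_operator_space S G l u"
  shows "l {} = {}" "u {} = {}"
  using assms unfolding granular_operator_space_def by simp_all

theorem mainTheorem1:
  fixes S :: "'a set" and G :: "'a set set" and l u :: "'a set \<Rightarrow> 'a set"
  assumes "granular_operator_space S G l u"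
  defines "Q \<equiv> Pow S // rough_eq S l u"
  shows "partial_order_on Q {(\<alpha>, \<beta>). \<alpha> \<in> Q \<and> \<beta> \<in> Q \<and> cls_le l u \<alpha> \<beta>}
    \<and> rough_eq S l u `` {{}} \<in> Q
    \<and> cls_l l (rough_eq S l u `` {{}}) = {} \<and> cls_u u (rough_eq S l u `` {{}}) = {}
    \<and> (\<forall>\<beta>\<in>Q. cls_le l u (rough_eq S l u `` {{}}) \<beta>)
    \<and> rough_eq S l u `` {S} \<in> Q
    \<and> cls_l l (rough_eq S l u `` {S}) = l S \<and> cls_u u (rough_eq S l u `` {S}) = u S
    \<and> (\<forall>\<beta>\<in>Q. cls_le l u \<beta> (rough_eq S l u `` {S}))"
proof -
  note empty = granular_operator_space_empty[OF assms(1)]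
  have least: "cls_le l u (rough_eq S l u `` {{}}) \<beta>"
    and greatest: "cls_le l u \<beta> (rough_eq S l u `` {S})"
    if \<beta>: "\<beta> \<in> Q" for \<beta>
  proof -
    obtain B where "B \<subseteq> S" "\<beta> = rough_eq S l u `` {B}"
      using \<beta> unfolding Q_def by (rule rough_eq_quotientE)
    then show "cls_le l u (rough_eq S l u `` {{}}) \<beta>" "cls_le l u \<beta> (rough_eq S l u `` {S})"
      using granular_operator_space_mono[OF assms(1), of B S]
      by (simp_all add: cls_le_rough_eq_Image_iff empty)
  qed
  have least_approx: "cls_l l (rough_eq S l u `` {{}}) = {}" "cls_u u (rough_eq S l u `` {{}}) = {}"
    by (simp_all add: cls_l_rough_eq_Image cls_u_rough_eq_Image empty)
  have greatest_approx: "cls_l l (rough_eq S l u `` {S}) = l S" "cls_u u (rough_eq S l u `` {S}) = u S"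
    by (simp_all add: cls_l_rough_eq_Image cls_u_rough_eq_Image)
  have in_Q: "rough_eq S l u `` {{}} \<in> Q" "rough_eq S l u `` {S} \<in> Q"
    unfolding Q_def by (simp_all add: rough_eq_Image_in_quotient)
  show ?thesis
    using partial_order_on_cls_le[of S l u, folded Q_def] least greatest least_approx greatest_approx in_Q
    by blast
qed

end
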